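(* Let $n \ge 2$ be an integer and let $1 \le \underline{x}_i < \bar{x}_i$ for $i \in \{1,2\}$. For every $(x_1,x_2) \in [\underline{x}_1,\bar{x}_1] \times [\underline{x}_2,\bar{x}_2]$, the set $S(x)$ of optimal solutions of the problem $$\max_{y \in \mathbb{R}^{n+2}} \; y_1 - y_n\,(x_1 + x_2 - y_{n+1} - y_{n+2})$$ subject to $y_1 + y_n = \tfrac12$, $y_i^2 \le y_{i+1}$ for $i \in \{1,\dots,n-1\}$, $y_i \ge 0$ for $i \in \{1,\dots,n\}$, $y_{n+1} \in [0,x_1]$, $y_{n+2} \in [-x_2,x_2]$, is a singleton. *)

theory Defs
  imports Main "HOL-Library.FuncSet" Complex_Main
begin

definition vec_space :: "nat \<Rightarrow> (nat \<Rightarrow> real) set" where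
  "vec_space n = {1..n+2} \<rightarrow>\<^sub>E (UNIV :: real set)"

definition feasible :: "nat \<Rightarrow> real \<Rightarrow> real \<Rightarrow> (nat \<Rightarrow> real) \<Rightarrow> bool" where
  "feasible n x1 x2 y \<longleftrightarrow>
     y 1 + y n = 1/2 \<and>
     (\<forall>i\<in>{1..n-1}. (y i)^2 \<le> y (i+1)) \<and>
     (\<forall>i\<in>{1..n}. y i \<ge> 0) \<and>
     y (n+1) \<in> {0..x1} \<and>
     y (n+2) \<in> {-x2..x2}"

definition objective :: "nat \<Rightarrow> real \<Rightarrow> real \<Rightarrow> (nat \<Rightarrow> real) \<Rightarrow> real" where
  "objective n x1 x2 y = y 1 - y n * (x1 + x2 - y (n+1) - y (n+2))"

definition optimal_set :: "nat \<Rightarrow> real \<Rightarrow> real \<Rightarrow> (nat \<Rightarrow> real) set" where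
  "optimal_set n x1 x2 =
     {y \<in> vec_space n. feasible n x1 x2 y \<and>
        (\<forall>z\<in>vec_space n. feasible n x1 x2 z \<longrightarrow> objective n x1 x2 z \<le> objective n x1 x2 y)}"

end

theory Submission
  imports Defs
begin

text \<open>Along the chain \<open>y\<^sub>i\<^sup>2 \<le> y\<^sub>i\<^sub>+\<^sub>1\<close> every feasible point has
  \<open>y\<^sub>1 ^ 2^(k-1) \<le> y\<^sub>k\<close>, so \<open>y\<^sub>1 + y\<^sub>1 ^ 2^(n-1) \<le> y\<^sub>1 + y\<^sub>n = 1/2\<close> and \<open>y\<^sub>1\<close> is at most the
  positive root \<open>t\<close> of \<open>s + s ^ 2^(n-1) = 1/2\<close>. The penalty term of the objective is
  nonnegative, so the objective is at most \<open>y\<^sub>1 \<le> t\<close>, and \<open>t\<close> is attained by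
  \<open>y\<^sub>k = t ^ 2^(k-1)\<close>, \<open>y\<^sub>n\<^sub>+\<^sub>1 = x\<^sub>1\<close>, \<open>y\<^sub>n\<^sub>+\<^sub>2 = x\<^sub>2\<close>. Conversely an optimal point has
  \<open>y\<^sub>1 = t\<close>, hence \<open>y\<^sub>n = t ^ 2^(n-1) > 0\<close>, so the penalty bracket vanishes, and the chain,
  squeezed between its two ends, is forced to be \<open>y\<^sub>k = t ^ 2^(k-1)\<close>.\<close>

lemma power_two_chain_lower:
  fixes a :: "nat \<Rightarrow> 'a :: linordered_idom"
  assumes "m \<le> k" and sq: "\<And>i. m \<le> i \<Longrightarrow> i < k \<Longrightarrow> (a i)\<^sup>2 \<le> a (Suc i)" and "0 \<le> a m"
  shows "a m ^ 2 ^ (k - m) \<le> a k"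
  using \<open>m \<le> k\<close> sq
proof (induction k rule: dec_induct)
  case base
  then show ?case by simp
next
  case (step k)
  have "a m ^ 2 ^ (Suc k - m) = (a m ^ 2 ^ (k - m))\<^sup>2"
    using step.hyps by (simp add: Suc_diff_le power_mult[symmetric] mult.commute)
  also have "\<dots> \<le> (a k)\<^sup>2"
    using step \<open>0 \<le> a m\<close> by (intro power_mono) auto
  also have "\<dots> \<le> a (Suc k)"
    using step by simp
  finally show ?case .
qed

lemma power_two_chain_upper:
  fixes a :: "nat \<Rightarrow> 'a :: linordered_idom"
  assumes "m \<le> j" "j \<le> k" and sq: "\<And>i. m \<le> i \<Longrightarrow> i < k \<Longrightarrow> (a i)\<^sup>2 \<le> a (Suc i)"
    and "a k \<le> t ^ 2 ^ (k - m)" and "0 \<le> t"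
  shows "a j \<le> t ^ 2 ^ (j - m)"
  using \<open>j \<le> k\<close>
proof (induction j rule: inc_induct)
  case base
  show ?case using assms(4) .
next
  case (step i)
  with \<open>m \<le> j\<close> have "m \<le> i" by simp
  have "(a i)\<^sup>2 \<le> a (Suc i)"
    using sq \<open>m \<le> i\<close> step.hyps by simp
  also have "\<dots> \<le> t ^ 2 ^ (Suc i - m)"
    using step.IH .
  also have "\<dots> = (t ^ 2 ^ (i - m))\<^sup>2"
    using \<open>m \<le> i\<close> by (simp add: Suc_diff_le power_mult[symmetric] mult.commute)
  finally show ?case
    using \<open>0 \<le> t\<close> by (meson power2_le_imp_le zero_le_power)
qed

lemma add_power_strict_mono:
  fixes a b :: "'a :: linordered_idom"
  assumes "0 \<le> a" "a < b"
  shows "a + a ^ N < b + b ^ N"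
  using assms power_mono[of a b N] by simp

lemma add_power_le_imp_le:
  fixes a b :: "'a :: linordered_idom"
  assumes "a + a ^ N \<le> b + b ^ N" "0 \<le> b"
  shows "a \<le> b"
  using assms add_power_strict_mono[of b a N] by force

lemma add_power_eq_half_has_pos_root:
  assumes "N \<ge> 1"
  obtains t :: real where "0 < t" "t + t ^ N = 1/2"
proof -
  have "\<exists>t::real. 0 \<le> t \<and> t \<le> 1/2 \<and> t + t ^ N = 1/2"
    using assms by (intro IVT') (auto simp: power_0_left intro!: continuous_intros)
  then obtain t :: real where t: "0 \<le> t" "t + t ^ N = 1/2"
    by blast
  moreover have "t \<noteq> 0"
    using t assms by (auto simp: power_0_left)
  ultimately show ?thesis
    using that[of t] by simp
qed

lemma feasible_square_chain:
  assumes "feasible n x1 x2 z" "1 \<le> i" "i < n"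
  shows "(z i)\<^sup>2 \<le> z (Suc i)"
  using assms unfolding feasible_def by auto

lemma feasible_nonneg:
  assumes "feasible n x1 x2 z" "1 \<le> i" "i \<le> n"
  shows "0 \<le> z i"
  using assms unfolding feasible_def by auto

lemma feasible_first_power_le:
  assumes "feasible n x1 x2 z" "1 \<le> k" "k \<le> n"
  shows "z 1 ^ 2 ^ (k - 1) \<le> z k"
proof (rule power_two_chain_lower)
  show "(z i)\<^sup>2 \<le> z (Suc i)" if "1 \<le> i" "i < k" for i
    using feasible_square_chain[OF assms(1) \<open>1 \<le> i\<close>] that assms(3) by simp
  show "0 \<le> z 1"
    using feasible_nonneg[OF assms(1)] assms(2,3) by simp
qed (use assms in simp)

lemma feasible_le_power_of_last:
  assumes "feasible n x1 x2 z" "1 \<le> k" "k \<le> n"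
    and "z n \<le> t ^ 2 ^ (n - 1)" "0 \<le> t"
  shows "z k \<le> t ^ 2 ^ (k - 1)"
proof (rule power_two_chain_upper[where k = n])
  show "(z i)\<^sup>2 \<le> z (Suc i)" if "1 \<le> i" "i < n" for i
    using feasible_square_chain[OF assms(1) that] .
qed (use assms in simp_all)

lemma feasible_first_le_root:
  assumes "feasible n x1 x2 z" "1 \<le> n" "0 \<le> t" "t + t ^ 2 ^ (n - 1) = 1/2"
  shows "z 1 \<le> t"
proof (rule add_power_le_imp_le)
  have "z 1 ^ 2 ^ (n - 1) \<le> z n"
    using feasible_first_power_le[OF assms(1)] assms(2) by simp
  then show "z 1 + z 1 ^ 2 ^ (n - 1) \<le> t + t ^ 2 ^ (n - 1)"
    using assms(1,4) unfolding feasible_def by simp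
qed (use assms in simp)

lemma objective_le_first:
  assumes "feasible n x1 x2 z" "1 \<le> n"
  shows "objective n x1 x2 z \<le> z 1"
proof -
  have "0 \<le> z n" "0 \<le> x1 + x2 - z (n+1) - z (n+2)"
    using assms unfolding feasible_def by auto
  then show ?thesis
    unfolding objective_def by simp
qed

definition optimal_point :: "nat \<Rightarrow> real \<Rightarrow> real \<Rightarrow> real \<Rightarrow> nat \<Rightarrow> real" where
  "optimal_point n x1 x2 t =
     restrict (\<lambda>i. if i \<le> n then t ^ 2 ^ (i - 1) else if i = n + 1 then x1 else x2) {1..n+2}"

lemma optimal_point_in_vec_space: "optimal_point n x1 x2 t \<in> vec_space n"
  unfolding optimal_point_def vec_space_def by simp

lemma feasible_optimal_point:
  assumes "1 \<le> n" "0 \<le> x1" "0 \<le> x2" "0 \<le> t" "t + t ^ 2 ^ (n - 1) = 1/2"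
  shows "feasible n x1 x2 (optimal_point n x1 x2 t)"
  unfolding feasible_def
proof (intro conjI ballI)
  fix i assume i: "i \<in> {1..n-1}"
  then have "(t ^ 2 ^ (i - 1))\<^sup>2 = t ^ 2 ^ i"
    by (cases i) (auto simp: power_mult[symmetric] mult.commute)
  with i show "(optimal_point n x1 x2 t i)\<^sup>2 \<le> optimal_point n x1 x2 t (i + 1)"
    unfolding optimal_point_def by auto
qed (use assms in \<open>auto simp: optimal_point_def\<close>)

lemma objective_optimal_point:
  assumes "1 \<le> n"
  shows "objective n x1 x2 (optimal_point n x1 x2 t) = t"
  using assms unfolding objective_def optimal_point_def by simp

lemma optimal_point_unique:
  assumes w: "w \<in> vec_space n" "feasible n x1 x2 w" "t \<le> objective n x1 x2 w"
    and "1 \<le> n" "0 < t" "t + t ^ 2 ^ (n - 1) = 1/2"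
  shows "w = optimal_point n x1 x2 t"
proof -
  have w1: "w 1 = t"
    using objective_le_first[OF w(2) \<open>1 \<le> n\<close>] w(3)
      feasible_first_le_root[OF w(2) \<open>1 \<le> n\<close> less_imp_le[OF \<open>0 < t\<close>] assms(6)]
    by linarith
  then have wn: "w n = t ^ 2 ^ (n - 1)"
    using w(2) assms(6) unfolding feasible_def by simp
  then have "w n > 0"
    using \<open>0 < t\<close> by simp
  moreover have "w n * (x1 + x2 - w (n+1) - w (n+2)) = 0"
    using objective_le_first[OF w(2) \<open>1 \<le> n\<close>] w(3) w1 unfolding objective_def by simp
  ultimately have "w (n+1) = x1" "w (n+2) = x2"
    using w(2) unfolding feasible_def by auto
  moreover have "w k = t ^ 2 ^ (k - 1)" if "1 \<le> k" "k \<le> n" for k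
    using feasible_first_power_le[OF w(2) that] feasible_le_power_of_last[OF w(2) that]
      w1 wn \<open>0 < t\<close> by force
  moreover have "i \<in> {1..n+2} \<Longrightarrow> i \<le> n \<or> i = n + 1 \<or> i = n + 2" for i
    by auto
  ultimately show ?thesis
    using w(1) unfolding vec_space_def optimal_point_def
    by (intro extensionalityI[of _ "{1..n+2}"]) (auto simp: PiE_def)
qed

theorem mainTheorem2:
  fixes n :: nat and xl1 xu1 xl2 xu2 x1 x2 :: real
  assumes "n \<ge> 2"
    and "1 \<le> xl1" and "xl1 < xu1" and "1 \<le> xl2" and "xl2 < xu2"
    and "x1 \<in> {xl1..xu1}" and "x2 \<in> {xl2..xu2}"
  shows "\<exists>y. optimal_set n x1 x2 = {y}"
proof -
  have n: "1 \<le> n" and x: "0 \<le> x1" "0 \<le> x2"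
    using assms by auto
  obtain t :: real where t: "0 < t" "t + t ^ 2 ^ (n - 1) = 1/2"
    by (rule add_power_eq_half_has_pos_root[of "2 ^ (n - 1)"]) auto
  define y where "y = optimal_point n x1 x2 t"
  have y: "y \<in> vec_space n" "feasible n x1 x2 y" "objective n x1 x2 y = t"
    unfolding y_def using optimal_point_in_vec_space feasible_optimal_point[OF n x]
      objective_optimal_point[OF n] t by auto
  have bound: "objective n x1 x2 z \<le> t" if "feasible n x1 x2 z" for z
    using objective_le_first[OF that n] feasible_first_le_root[OF that n less_imp_le[OF t(1)] t(2)]
    by linarith
  have "optimal_set n x1 x2 = {y}"
  proof (intro equalityI subsetI)
    fix w assume "w \<in> optimal_set n x1 x2"
    then have "w \<in> vec_space n" "feasible n x1 x2 w" "objective n x1 x2 y \<le> objective n x1 x2 w"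
      unfolding optimal_set_def using y(1,2) by blast+
    then show "w \<in> {y}"
      using optimal_point_unique[OF _ _ _ n t] y(3) unfolding y_def by simp
  next
    fix w assume "w \<in> {y}"
    then show "w \<in> optimal_set n x1 x2"
      unfolding optimal_set_def using y bound by simp
  qed
  then show ?thesis by blast
qed

end
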